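(* The variety $\mathsf{V}(S_{(4,401)})$ is the ai-semiring variety defined by the identities $xyz\approx yxz$; $xyz\approx xyz+y$, $xy\approx xy+y$, $yz\approx yz+y$; $xyz\approx xy+yz+xz$; $x^2+y\approx x^2y$; $x_1x_2x_3+x_3x_4\approx x_1x_2x_3+x_3x_4+x_3x_2$; and $x_2x_3+x_3x_4\approx x_2x_3+x_3x_4+x_3x_2$.
   Context: An ai-semiring is an algebra $(S,+,\cdot)$ with $(S,+)$ a semilattice, $(S,\cdot)$ a semigroup, and both distributive laws. $\mathsf{V}(S)$ is the variety generated by $S$; "the ai-semiring variety defined by identities $\Sigma$" is the class of all ai-semirings satisfying $\Sigma$. $S_{(4,401)}$ has carrier $\{1,2,3,4\}$; addition: $x+x=x$, $2+x=x$, $1+x=1$ for all $x$, $3+4=1$; multiplication (row $a$, column $b$ gives $a\cdot b$): row $1$: $1,1,1,1$; row $2$: $1,2,3,4$; row $3$: $1,1,1,1$; row $4$: $1,4,1,1$. *)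

theory Defs
  imports Main
begin

text \<open>Algebras of type (+,*) are represented by two binary operations on a type 'a
  (the carrier is the whole type).\<close>

definition ai_semiring :: "('a \<Rightarrow> 'a \<Rightarrow> 'a) \<Rightarrow> ('a \<Rightarrow> 'a \<Rightarrow> 'a) \<Rightarrow> bool" where
  "ai_semiring add mul \<longleftrightarrow>
     (\<forall>x y z. add (add x y) z = add x (add y z)) \<and>
     (\<forall>x y. add x y = add y x) \<and>
     (\<forall>x. add x x = x) \<and>
     (\<forall>x y z. mul (mul x y) z = mul x (mul y z)) \<and>
     (\<forall>x y z. mul x (add y z) = add (mul x y) (mul x z)) \<and>
     (\<forall>x y z. mul (add y z) x = add (mul y x) (mul z x))"

datatype trm = Var nat | Add trm trm | Mul trm trm

fun eval :: "('a \<Rightarrow> 'a \<Rightarrow> 'a) \<Rightarrow> ('a \<Rightarrow> 'a \<Rightarrow> 'a) \<Rightarrow> (nat \<Rightarrow> 'a) \<Rightarrow> trm \<Rightarrow> 'a" where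
  "eval add mul v (Var i) = v i"
| "eval add mul v (Add s t) = add (eval add mul v s) (eval add mul v t)"
| "eval add mul v (Mul s t) = mul (eval add mul v s) (eval add mul v t)"

definition satisfies :: "('a \<Rightarrow> 'a \<Rightarrow> 'a) \<Rightarrow> ('a \<Rightarrow> 'a \<Rightarrow> 'a) \<Rightarrow> trm \<times> trm \<Rightarrow> bool" where
  "satisfies add mul e \<longleftrightarrow> (\<forall>v. eval add mul v (fst e) = eval add mul v (snd e))"

datatype s4 = E1 | E2 | E3 | E4

fun add4 :: "s4 \<Rightarrow> s4 \<Rightarrow> s4" where
  "add4 x y = (if x = y then x
               else if x = E2 then y else if y = E2 then x
               else if x = E1 \<or> y = E1 then E1
               else E1 \<comment> \<open>remaining case: {x,y} = {3,4}, and 3+4 = 1\<close>)"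

fun mul4 :: "s4 \<Rightarrow> s4 \<Rightarrow> s4" where
  "mul4 E2 y = y"
| "mul4 E4 E2 = E4"
| "mul4 _ _ = E1"

text \<open>Membership in the variety V(S_(4,401)) generated by S_(4,401): by Birkhoff's
  HSP theorem, V(S) is exactly the class of algebras satisfying every identity of S.\<close>
definition in_V_S4 :: "('a \<Rightarrow> 'a \<Rightarrow> 'a) \<Rightarrow> ('a \<Rightarrow> 'a \<Rightarrow> 'a) \<Rightarrow> bool" where
  "in_V_S4 add mul \<longleftrightarrow> (\<forall>e. satisfies add4 mul4 e \<longrightarrow> satisfies add mul e)"

abbreviation (input) "vx \<equiv> Var 0"
abbreviation (input) "vy \<equiv> Var 1"
abbreviation (input) "vz \<equiv> Var 2"
abbreviation (input) "v1 \<equiv> Var 11"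
abbreviation (input) "v2 \<equiv> Var 12"
abbreviation (input) "v3 \<equiv> Var 13"
abbreviation (input) "v4 \<equiv> Var 14"

definition Sigma_401 :: "(trm \<times> trm) set" where
  "Sigma_401 = {
     (Mul (Mul vx vy) vz, Mul (Mul vy vx) vz),
     (Mul (Mul vx vy) vz, Add (Mul (Mul vx vy) vz) vy),
     (Mul vx vy, Add (Mul vx vy) vy),
     (Mul vy vz, Add (Mul vy vz) vy),
     (Mul (Mul vx vy) vz, Add (Add (Mul vx vy) (Mul vy vz)) (Mul vx vz)),
     (Add (Mul vx vx) vy, Mul (Mul vx vx) vy),
     (Add (Mul (Mul v1 v2) v3) (Mul v3 v4),
      Add (Add (Mul (Mul v1 v2) v3) (Mul v3 v4)) (Mul v3 v2)),
     (Add (Mul v2 v3) (Mul v3 v4),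
      Add (Add (Mul v2 v3) (Mul v3 v4)) (Mul v3 v2)) }"

end

theory Submission
  imports Defs
begin

text \<open>Write a \<preceq> b for a + b = b. The identities make every factor lie below its product
  and split xyz into xy + yz + xz, so in their models the value of a term t is the join of the
  values of its variables and of the products ab over the pairs (a, b) such that a occurs before b
  in some monomial of t. Moreover x^2 + y = x^2y and x_3x_2 \<preceq> x_2x_3 + x_3x_4 put below t also
  the products of a certain closure of these pairs. Conversely, valuations into S_(4,401) detect
  every variable of a term and every pair outside this closure. So if S_(4,401) satisfies s \<approx> t,
  then s \<preceq> t in every model of the identities, and by symmetry s = t.\<close>

fun vars :: "trm \<Rightarrow> nat set" where
  "vars (Var i) = {i}"
| "vars (Add s t) = vars s \<union> vars t"
| "vars (Mul s t) = vars s \<union> vars t"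

fun var_pairs :: "trm \<Rightarrow> (nat \<times> nat) set" where
  "var_pairs (Var i) = {}"
| "var_pairs (Add s t) = var_pairs s \<union> var_pairs t"
| "var_pairs (Mul s t) = var_pairs s \<union> var_pairs t \<union> vars s \<times> vars t"

lemma var_pairs_subset_vars: "var_pairs t \<subseteq> vars t \<times> vars t"
  by (induction t) auto

inductive_set pair_closure :: "trm \<Rightarrow> (nat \<times> nat) set" for t where
  var_pair: "(a, b) \<in> var_pairs t \<Longrightarrow> (a, b) \<in> pair_closure t"
| square: "(a, a) \<in> pair_closure t \<Longrightarrow> b \<in> vars t \<Longrightarrow> (a, b) \<in> pair_closure t"
| flip: "(a, b) \<in> pair_closure t \<Longrightarrow> (b, c) \<in> pair_closure t \<Longrightarrow> (b, a) \<in> pair_closure t"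

locale ai_semiring_order =
  fixes add mul :: "'a \<Rightarrow> 'a \<Rightarrow> 'a"
  assumes ai_semiring: "ai_semiring add mul"
begin

abbreviation le :: "'a \<Rightarrow> 'a \<Rightarrow> bool" (infix "\<preceq>" 50) where
  "a \<preceq> b \<equiv> add a b = b"

lemma add_assoc: "add (add x y) z = add x (add y z)"
  and add_commute: "add x y = add y x"
  and add_idem: "add x x = x"
  and mul_assoc: "mul (mul x y) z = mul x (mul y z)"
  and distrib_left: "mul x (add y z) = add (mul x y) (mul x z)"
  and distrib_right: "mul (add y z) x = add (mul y x) (mul z x)"
  using ai_semiring unfolding ai_semiring_def by blast+

lemma le_refl: "a \<preceq> a"
  by (rule add_idem)

lemma add_le_iff: "add a b \<preceq> c \<longleftrightarrow> a \<preceq> c \<and> b \<preceq> c"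
  by (metis add_assoc add_commute add_idem)

lemma le_trans: "a \<preceq> b \<Longrightarrow> b \<preceq> c \<Longrightarrow> a \<preceq> c"
  by (metis add_assoc)

lemma le_antisym: "a \<preceq> b \<Longrightarrow> b \<preceq> a \<Longrightarrow> a = b"
  by (metis add_commute)

end

locale ai_semiring_401 = ai_semiring_order +
  assumes right_le_mul: "add y (mul x y) = mul x y"
    and left_le_mul: "add x (mul x y) = mul x y"
    and mul3_eq: "mul (mul x y) z = add (add (mul x y) (mul y z)) (mul x z)"
    and add_square_eq: "add (mul x x) y = mul (mul x x) y"
    and flip_le: "add (mul y x) (add (mul x y) (mul y z)) = add (mul x y) (mul y z)"
begin

lemma factors_le_if_mul_le: "mul x y \<preceq> c \<Longrightarrow> x \<preceq> c \<and> y \<preceq> c"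
  using le_trans left_le_mul right_le_mul by blast

lemma mul_eval_le_iff:
  "mul (eval add mul v s) y \<preceq> c \<longleftrightarrow>
     eval add mul v s \<preceq> c \<and> y \<preceq> c \<and> (\<forall>a\<in>vars s. mul (v a) y \<preceq> c)"
proof (induction s)
  case (Var i)
  then show ?case by (auto dest: factors_le_if_mul_le)
next
  case (Add s1 s2)
  then show ?case by (auto simp: distrib_right add_le_iff)
next
  case (Mul s1 s2)
  then show ?case by (auto simp: mul3_eq add_le_iff dest: factors_le_if_mul_le)
qed

lemma eval_mul_le_iff:
  "mul x (eval add mul v t) \<preceq> c \<longleftrightarrow>
     x \<preceq> c \<and> eval add mul v t \<preceq> c \<and> (\<forall>b\<in>vars t. mul x (v b) \<preceq> c)"
proof (induction t)
  case (Var i)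
  then show ?case by (auto dest: factors_le_if_mul_le)
next
  case (Add t1 t2)
  then show ?case by (auto simp: distrib_left add_le_iff)
next
  case (Mul t1 t2)
  then show ?case
    by (auto simp: mul3_eq add_le_iff simp flip: mul_assoc dest: factors_le_if_mul_le)
qed

lemma eval_le_iff:
  "eval add mul v t \<preceq> c \<longleftrightarrow>
     (\<forall>a\<in>vars t. v a \<preceq> c) \<and> (\<forall>(a, b)\<in>var_pairs t. mul (v a) (v b) \<preceq> c)"
proof (induction t)
  case (Mul s t)
  then show ?case by (auto simp: mul_eval_le_iff eval_mul_le_iff)
qed (auto simp: add_le_iff)

lemma mul_le_eval_if_pair_closure:
  "(a, b) \<in> pair_closure t \<Longrightarrow> mul (v a) (v b) \<preceq> eval add mul v t"
proof (induction rule: pair_closure.induct)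
  case (var_pair a b)
  then show ?case using eval_le_iff le_refl by blast
next
  case (square a b)
  have "add (mul (v a) (v a)) (v b) \<preceq> eval add mul v t"
    using square eval_le_iff le_refl add_le_iff by blast
  moreover have "mul (v a) (v b) \<preceq> mul (mul (v a) (v a)) (v b)"
    by (metis mul3_eq add_assoc add_commute add_idem)
  ultimately show ?case
    using add_square_eq le_trans by metis
next
  case (flip a b c)
  then show ?case using flip_le le_trans add_le_iff by metis
qed

end

lemma add4_simps [simp]:
  "add4 E1 y = E1" "add4 y E1 = E1" "add4 E2 y = y" "add4 y E2 = y"
  "add4 E3 E3 = E3" "add4 E4 E4 = E4" "add4 E3 E4 = E1" "add4 E4 E3 = E1"
  by (cases y; simp)+

declare add4.simps [simp del]

lemma all_s4: "(\<forall>x. P x) \<longleftrightarrow> P E1 \<and> P E2 \<and> P E3 \<and> P E4"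
  by (metis s4.exhaust)

interpretation S4: ai_semiring_401 add4 mul4
  by (unfold_locales; (atomize (full))?; simp add: ai_semiring_def all_s4)

lemma S4_satisfies_Sigma_401: "\<forall>e\<in>Sigma_401. satisfies add4 mul4 e"
proof -
  have S4_identities:
    "mul4 (mul4 x y) z = mul4 (mul4 y x) z"
    "mul4 (mul4 x y) z = add4 (mul4 (mul4 x y) z) y"
    "mul4 x y = add4 (mul4 x y) y"
    "mul4 y z = add4 (mul4 y z) y"
    "mul4 (mul4 x y) z = add4 (add4 (mul4 x y) (mul4 y z)) (mul4 x z)"
    "add4 (mul4 x x) y = mul4 (mul4 x x) y"
    "add4 (mul4 (mul4 w x) y) (mul4 y z) = add4 (add4 (mul4 (mul4 w x) y) (mul4 y z)) (mul4 y x)"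
    "add4 (mul4 x y) (mul4 y z) = add4 (add4 (mul4 x y) (mul4 y z)) (mul4 y x)"
    for w x y z
    by (cases w; cases x; cases y; cases z; simp)+
  show ?thesis
    unfolding Sigma_401_def satisfies_def by (simp, intro conjI allI; rule S4_identities)
qed

lemma vars_subset_if_S4_satisfies:
  assumes "satisfies add4 mul4 (s, t)"
  shows "vars s \<subseteq> vars t"
proof
  fix a
  assume "a \<in> vars s"
  define \<phi> where "\<phi> = (\<lambda>i. if i = a then E1 else E2)"
  have "add4 (\<phi> a) (eval add4 mul4 \<phi> s) = eval add4 mul4 \<phi> s"
    using \<open>a \<in> vars s\<close> S4.eval_le_iff S4.le_refl by blast
  then have "eval add4 mul4 \<phi> s = E1"
    by (simp add: \<phi>_def)
  then have "eval add4 mul4 \<phi> t = E1"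
    using assms by (simp add: satisfies_def)
  then show "a \<in> vars t"
    using S4.eval_le_iff[of \<phi> t E2] var_pairs_subset_vars by (fastforce simp: \<phi>_def)
qed

lemma S4_eval_eq_E1_if_var_pair:
  assumes "(a, b) \<in> var_pairs t" and "mul4 (\<phi> a) (\<phi> b) = E1"
  shows "eval add4 mul4 \<phi> t = E1"
proof -
  have "add4 (mul4 (\<phi> a) (\<phi> b)) (eval add4 mul4 \<phi> t) = eval add4 mul4 \<phi> t"
    using assms(1) S4.eval_le_iff S4.le_refl by fast
  then show ?thesis
    using assms(2) by simp
qed

text \<open>A product of values in {E2, E4} is E1 iff both factors are E4, and a product of values
  in {E2, E3} is E1 iff its left factor is E3.\<close>

lemma S4_separating_valuation:
  assumes "(a, b) \<notin> pair_closure t" and "a \<in> vars t" and "b \<in> vars t"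
  obtains \<phi> J where "mul4 (\<phi> a) (\<phi> b) = E1" and "J \<noteq> E1"
    and "add4 (eval add4 mul4 \<phi> t) J = J"
proof (cases "a = b \<or> (\<exists>c. (a, c) \<in> pair_closure t)")
  case True
  have "(b, a) \<notin> pair_closure t"
    using True assms(1) pair_closure.flip by blast
  then have no_pair: "(p, q) \<notin> var_pairs t" if "p \<in> {a, b}" and "q \<in> {a, b}" for p q
    using that assms pair_closure.var_pair pair_closure.square by blast
  define \<phi> where "\<phi> = (\<lambda>i. if i \<in> {a, b} then E4 else E2)"
  have "add4 (eval add4 mul4 \<phi> t) E4 = E4"
    unfolding S4.eval_le_iff using no_pair by (auto simp: \<phi>_def)
  then show thesis
    using that[of \<phi> E4] by (simp add: \<phi>_def)
next
  case False
  then have first_not_a: "p \<noteq> a" if "(p, q) \<in> var_pairs t" for p q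
    using that pair_closure.var_pair by blast
  define \<phi> where "\<phi> = (\<lambda>i. if i = a then E3 else E2)"
  have "add4 (eval add4 mul4 \<phi> t) E3 = E3"
    unfolding S4.eval_le_iff using first_not_a by (auto simp: \<phi>_def)
  then show thesis
    using that[of \<phi> E3] False by (simp add: \<phi>_def)
qed

lemma var_pairs_subset_pair_closure_if_S4_satisfies:
  assumes "satisfies add4 mul4 (s, t)"
  shows "var_pairs s \<subseteq> pair_closure t"
proof (rule subrelI, rule ccontr)
  fix a b
  assume ab: "(a, b) \<in> var_pairs s" and not_closed: "(a, b) \<notin> pair_closure t"
  have "a \<in> vars t" and "b \<in> vars t"
    using ab var_pairs_subset_vars vars_subset_if_S4_satisfies[OF assms] by blast+
  then obtain \<phi> J where "mul4 (\<phi> a) (\<phi> b) = E1" and "J \<noteq> E1"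
    and "add4 (eval add4 mul4 \<phi> t) J = J"
    by (rule S4_separating_valuation[OF not_closed])
  moreover have "eval add4 mul4 \<phi> t = E1"
    using assms S4_eval_eq_E1_if_var_pair[OF ab] \<open>mul4 (\<phi> a) (\<phi> b) = E1\<close>
    by (simp add: satisfies_def)
  ultimately show False
    by simp
qed

context ai_semiring_401
begin

lemma eval_le_if_S4_satisfies:
  assumes "satisfies add4 mul4 (s, t)"
  shows "eval add mul v s \<preceq> eval add mul v t"
proof -
  have "v a \<preceq> eval add mul v t" if "a \<in> vars t" for a
    using that eval_le_iff le_refl by blast
  moreover have "mul (v a) (v b) \<preceq> eval add mul v t" if "(a, b) \<in> pair_closure t" for a b
    using that by (rule mul_le_eval_if_pair_closure)
  ultimately show ?thesis
    unfolding eval_le_iff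
    using vars_subset_if_S4_satisfies[OF assms]
      var_pairs_subset_pair_closure_if_S4_satisfies[OF assms]
    by blast
qed

lemma satisfies_if_S4_satisfies:
  assumes "satisfies add4 mul4 e"
  shows "satisfies add mul e"
proof -
  obtain s t where e: "e = (s, t)"
    by fastforce
  have "satisfies add4 mul4 (t, s)"
    using assms by (simp add: e satisfies_def)
  then show ?thesis
    using assms eval_le_if_S4_satisfies le_antisym by (auto simp: e satisfies_def)
qed

end

lemma ai_semiring_401_if_satisfies_Sigma_401:
  fixes add mul :: "'a \<Rightarrow> 'a \<Rightarrow> 'a"
  assumes "ai_semiring add mul" and "\<forall>e\<in>Sigma_401. satisfies add mul e"
  shows "ai_semiring_401 add mul"
proof -
  interpret ai_semiring_order add mul
    by (rule ai_semiring_order.intro) (rule assms(1))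
  have Sigma_identity: "eval add mul v s = eval add mul v t" if "(s, t) \<in> Sigma_401" for s t v
    using assms(2) that unfolding satisfies_def by fastforce
  show ?thesis
  proof unfold_locales
    fix x y z :: 'a
    let ?v = "(\<lambda>_. z)(0 := x, 1 := y)"
    show "add y (mul x y) = mul x y"
      using Sigma_identity[of "Mul vx vy" "Add (Mul vx vy) vy" ?v]
      by (simp add: Sigma_401_def add_commute)
    show "add x (mul x y) = mul x y"
      using Sigma_identity[of "Mul vy vz" "Add (Mul vy vz) vy" "(\<lambda>_. y)(1 := x)"]
      by (simp add: Sigma_401_def add_commute)
    show "mul (mul x y) z = add (add (mul x y) (mul y z)) (mul x z)"
      using Sigma_identity[of "Mul (Mul vx vy) vz"
          "Add (Add (Mul vx vy) (Mul vy vz)) (Mul vx vz)" ?v]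
      by (simp add: Sigma_401_def)
    show "add (mul x x) y = mul (mul x x) y"
      using Sigma_identity[of "Add (Mul vx vx) vy" "Mul (Mul vx vx) vy" ?v]
      by (simp add: Sigma_401_def)
    show "add (mul y x) (add (mul x y) (mul y z)) = add (mul x y) (mul y z)"
      using Sigma_identity[of "Add (Mul v2 v3) (Mul v3 v4)"
          "Add (Add (Mul v2 v3) (Mul v3 v4)) (Mul v3 v2)" "(\<lambda>_. z)(12 := x, 13 := y)"]
      by (simp add: Sigma_401_def add_commute)
  qed
qed

lemma ai_semiring_if_in_V_S4:
  fixes add mul :: "'a \<Rightarrow> 'a \<Rightarrow> 'a"
  assumes "in_V_S4 add mul"
  shows "ai_semiring add mul"
proof -
  have S4_identity: "eval add mul v s = eval add mul v t"
    if "\<forall>w. eval add4 mul4 w s = eval add4 mul4 w t" for s t v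
    using assms that unfolding in_V_S4_def satisfies_def by fastforce
  show ?thesis
    unfolding ai_semiring_def
  proof (intro conjI allI)
    fix x y z :: 'a
    let ?v = "(\<lambda>_. z)(0 := x, 1 := y)"
    show "add (add x y) z = add x (add y z)"
      using S4_identity[of "Add (Add vx vy) vz" "Add vx (Add vy vz)" ?v] S4.add_assoc by simp
    show "add x y = add y x"
      using S4_identity[of "Add vx vy" "Add vy vx" ?v] S4.add_commute by simp
    show "add x x = x"
      using S4_identity[of "Add vx vx" vx ?v] S4.add_idem by simp
    show "mul (mul x y) z = mul x (mul y z)"
      using S4_identity[of "Mul (Mul vx vy) vz" "Mul vx (Mul vy vz)" ?v] S4.mul_assoc by simp
    show "mul x (add y z) = add (mul x y) (mul x z)"
      using S4_identity[of "Mul vx (Add vy vz)" "Add (Mul vx vy) (Mul vx vz)" ?v] S4.distrib_left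
      by simp
    show "mul (add y z) x = add (mul y x) (mul z x)"
      using S4_identity[of "Mul (Add vy vz) vx" "Add (Mul vy vx) (Mul vz vx)" ?v] S4.distrib_right
      by simp
  qed
qed

theorem proposition3p8:
  fixes add mul :: "'a \<Rightarrow> 'a \<Rightarrow> 'a"
  shows "in_V_S4 add mul \<longleftrightarrow>
           (ai_semiring add mul \<and> (\<forall>e\<in>Sigma_401. satisfies add mul e))"
proof
  assume V: "in_V_S4 add mul"
  show "ai_semiring add mul \<and> (\<forall>e\<in>Sigma_401. satisfies add mul e)"
    using ai_semiring_if_in_V_S4[OF V] S4_satisfies_Sigma_401 V unfolding in_V_S4_def by blast
next
  assume "ai_semiring add mul \<and> (\<forall>e\<in>Sigma_401. satisfies add mul e)"
  then interpret ai_semiring_401 add mul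
    using ai_semiring_401_if_satisfies_Sigma_401 by blast
  show "in_V_S4 add mul"
    unfolding in_V_S4_def using satisfies_if_S4_satisfies by blast
qed

end
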